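(* Let $G$ be a connected graph of order $n\ge 3$. Then $\Gamma_{\rm cer}(G)=n-2$ if and only if $G$ is a simple diadem, a diadem, or one of the graphs $K_2+\overline{K}_{n-2}$ and $\overline{K}_2+\overline{K}_{n-2}$.
   Context: All graphs are finite and simple. A set $D\subseteq V_G$ is a dominating set of $G$ if every vertex of $V_G-D$ has a neighbor in $D$. A set $D$ is a certified dominating set of $G$ if $D$ is dominating and every vertex of $D$ has either zero or at least two neighbors in $V_G-D$; it is minimal if no proper subset is a certified dominating set. $\Gamma_{\rm cer}(G)$ is the maximum cardinality of a minimal certified dominating set. A graph is a corona if it equals $H\circ K_1$ for some graph $H$ (attach one new pendant vertex to each vertex of $H$); in a corona, a leaf is a vertex of degree one and a support is a vertex adjacent to a leaf. A simple diadem is a graph obtained from a corona by adding one new vertex and joining it to exactly one support of the corona. A diadem is a graph obtained from a corona by adding one new vertex and joining it to exactly one leaf and to the neighbor of that leaf. $F+H$ denotes the join of $F$ and $H$ (disjoint union plus all edges between them), and $\overline{K}_m$ is the edgeless graph on $m$ vertices. *)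

theory Defs
  imports Main
begin

definition graph :: "'a set \<Rightarrow> ('a \<Rightarrow> 'a \<Rightarrow> bool) \<Rightarrow> bool" where
  "graph V E \<longleftrightarrow> finite V \<and> (\<forall>x y. E x y \<longrightarrow> x \<in> V \<and> y \<in> V)
     \<and> (\<forall>x y. E x y \<longrightarrow> E y x) \<and> (\<forall>x. \<not> E x x)"

definition connected_graph :: "'a set \<Rightarrow> ('a \<Rightarrow> 'a \<Rightarrow> bool) \<Rightarrow> bool" where
  "connected_graph V E \<longleftrightarrow> (\<forall>x\<in>V. \<forall>y\<in>V. E\<^sup>*\<^sup>* x y)"

definition dominating :: "'a set \<Rightarrow> ('a \<Rightarrow> 'a \<Rightarrow> bool) \<Rightarrow> 'a set \<Rightarrow> bool" where
  "dominating V E D \<longleftrightarrow> D \<subseteq> V \<and> (\<forall>v\<in>V - D. \<exists>u\<in>D. E u v)"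

definition certified_dominating :: "'a set \<Rightarrow> ('a \<Rightarrow> 'a \<Rightarrow> bool) \<Rightarrow> 'a set \<Rightarrow> bool" where
  "certified_dominating V E D \<longleftrightarrow> dominating V E D \<and>
     (\<forall>v\<in>D. card {u \<in> V - D. E v u} = 0 \<or> card {u \<in> V - D. E v u} \<ge> 2)"

definition minimal_certified_dominating :: "'a set \<Rightarrow> ('a \<Rightarrow> 'a \<Rightarrow> bool) \<Rightarrow> 'a set \<Rightarrow> bool" where
  "minimal_certified_dominating V E D \<longleftrightarrow> certified_dominating V E D \<and>
     (\<forall>D'. D' \<subset> D \<longrightarrow> \<not> certified_dominating V E D')"

definition Gamma_cer :: "'a set \<Rightarrow> ('a \<Rightarrow> 'a \<Rightarrow> bool) \<Rightarrow> nat" where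
  "Gamma_cer V E = Max {card D | D. minimal_certified_dominating V E D}"

text \<open>The graph (V,E) equals the corona H \<circ> K1, where H = (V,E)[S] and l s is the
pendant vertex attached to s.\<close>
definition corona_with :: "'a set \<Rightarrow> ('a \<Rightarrow> 'a \<Rightarrow> bool) \<Rightarrow> 'a set \<Rightarrow> ('a \<Rightarrow> 'a) \<Rightarrow> bool" where
  "corona_with V E S l \<longleftrightarrow> S \<subseteq> V \<and> bij_betw l S (V - S) \<and>
     (\<forall>x\<in>S. \<forall>y\<in>V - S. E x y \<longleftrightarrow> y = l x) \<and>
     (\<forall>x\<in>V - S. \<forall>y\<in>V - S. \<not> E x y)"

definition is_corona :: "'a set \<Rightarrow> ('a \<Rightarrow> 'a \<Rightarrow> bool) \<Rightarrow> bool" where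
  "is_corona V E \<longleftrightarrow> (\<exists>S l. corona_with V E S l)"

definition simple_diadem :: "'a set \<Rightarrow> ('a \<Rightarrow> 'a \<Rightarrow> bool) \<Rightarrow> bool" where
  "simple_diadem V E \<longleftrightarrow> (\<exists>w\<in>V. \<exists>S l. \<exists>s\<in>S.
     corona_with (V - {w}) E S l \<and> (\<forall>u. E w u \<longleftrightarrow> u = s))"

definition diadem :: "'a set \<Rightarrow> ('a \<Rightarrow> 'a \<Rightarrow> bool) \<Rightarrow> bool" where
  "diadem V E \<longleftrightarrow> (\<exists>w\<in>V. \<exists>S l. \<exists>s\<in>S.
     corona_with (V - {w}) E S l \<and> (\<forall>u. E w u \<longleftrightarrow> u = s \<or> u = l s))"

definition join_with_independent :: "'a set \<Rightarrow> ('a \<Rightarrow> 'a \<Rightarrow> bool) \<Rightarrow> 'a set \<Rightarrow> bool" where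
  "join_with_independent V E A \<longleftrightarrow> A \<subseteq> V \<and>
     (\<forall>x\<in>A. \<forall>y\<in>V - A. E x y) \<and> (\<forall>x\<in>V - A. \<forall>y\<in>V - A. \<not> E x y)"

definition K2_join_indep :: "'a set \<Rightarrow> ('a \<Rightarrow> 'a \<Rightarrow> bool) \<Rightarrow> bool" where
  "K2_join_indep V E \<longleftrightarrow> (\<exists>a b. a \<noteq> b \<and> E a b \<and> join_with_independent V E {a, b})"

definition coK2_join_indep :: "'a set \<Rightarrow> ('a \<Rightarrow> 'a \<Rightarrow> bool) \<Rightarrow> bool" where
  "coK2_join_indep V E \<longleftrightarrow> (\<exists>a b. a \<noteq> b \<and> \<not> E a b \<and> join_with_independent V E {a, b})"

end

theory Submission
  imports Defs
begin

text \<open>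
  Since \<open>V\<close> is certified dominating and no certified dominating set misses exactly one
  vertex, \<open>Gamma_cer V E = n - 2\<close> means that some \<open>D = V - {x, y}\<close> is a minimal certified
  dominating set. Certification says that \<open>x\<close> and \<open>y\<close> have the same nonempty neighbourhood
  \<open>N\<close> in \<open>D\<close>. Minimality forbids any nonempty \<open>W \<subseteq> D\<close> missing a vertex of \<open>N\<close> whose
  vertices all keep a neighbour in \<open>D - W\<close> while no vertex of \<open>D - W - N\<close> has exactly one
  neighbour in \<open>W\<close>, for \<open>D - W\<close> would still be certified dominating. An extremal choice of
  \<open>W\<close> shows that \<open>D - N\<close> then splits into pendant edges and isolated vertices, and
  connectivity rules out the latter. If \<open>|N| \<ge> 2\<close>, a vertex of \<open>N\<close> together with the
  leaves of its neighbouring supports would be deletable, so \<open>D = N\<close> is independent and \<open>G\<close>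
  is the join of \<open>G[{x, y}]\<close> with the independent set \<open>N\<close>. If \<open>N = {s}\<close>, then \<open>G - x\<close> is
  a corona in which \<open>y\<close> is the leaf of \<open>s\<close>, and \<open>G\<close> is a simple diadem or a diadem.
  Conversely, each of these graphs has such a pair \<open>x, y\<close>.
\<close>

definition nbrs :: "'a set \<Rightarrow> ('a \<Rightarrow> 'a \<Rightarrow> bool) \<Rightarrow> 'a \<Rightarrow> 'a set" where
  "nbrs V F v = {u \<in> V. F v u}"

section \<open>Certified dominating sets\<close>

lemma graph_symp: "graph V E \<Longrightarrow> symp E"
  unfolding graph_def symp_def by blast

lemma graph_irreflp: "graph V E \<Longrightarrow> irreflp E"
  unfolding graph_def irreflp_def by blast

lemma graph_edgeD: "graph V E \<Longrightarrow> E x y \<Longrightarrow> x \<in> V \<and> y \<in> V"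
  unfolding graph_def by blast

lemma certified_dominating_subset: "certified_dominating V E D \<Longrightarrow> D \<subseteq> V"
  unfolding certified_dominating_def dominating_def by blast

lemma certified_dominating_whole: "certified_dominating V E V"
  unfolding certified_dominating_def dominating_def by simp

lemma certified_dominating_no_single_outer_nbr:
  assumes "certified_dominating V E D" "v \<in> D"
  shows "nbrs (V - D) E v \<noteq> {u}"
  using assms unfolding certified_dominating_def nbrs_def by fastforce

lemma card_Diff_certified_dominating_ne_1:
  assumes "certified_dominating V E D"
  shows "card (V - D) \<noteq> 1"
proof
  assume "card (V - D) = 1"
  then obtain x where x: "V - D = {x}" using card_1_singletonE by blast
  then obtain u where "u \<in> D" "E u x"
    using assms unfolding certified_dominating_def dominating_def by blast
  then have "nbrs (V - D) E u = {x}" using x unfolding nbrs_def by auto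
  then show False using certified_dominating_no_single_outer_nbr[OF assms \<open>u \<in> D\<close>] by blast
qed

lemma ex_minimal_certified_dominating:
  assumes "finite V"
  shows "\<exists>D. minimal_certified_dominating V E D"
proof -
  obtain D where D: "certified_dominating V E D"
    and least: "\<And>D'. certified_dominating V E D' \<Longrightarrow> card D \<le> card D'"
    using ex_has_least_nat[of "certified_dominating V E" V card] certified_dominating_whole
    by blast
  have "finite D" using certified_dominating_subset[OF D] assms finite_subset by blast
  then have "\<not> certified_dominating V E D'" if "D' \<subset> D" for D'
    using least[of D'] psubset_card_mono[OF _ that] by fastforce
  then show ?thesis using D unfolding minimal_certified_dominating_def by blast
qed

lemma card_minimal_certified_dominating_le:
  assumes "finite V" "certified_dominating V E D" "D \<noteq> V"
    and min: "minimal_certified_dominating V E D'"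
  shows "card D' \<le> card V - 2"
proof -
  have C': "certified_dominating V E D'" and sub: "D' \<subseteq> V"
    using min certified_dominating_subset unfolding minimal_certified_dominating_def by auto
  have "D' \<noteq> V"
    using min assms(2,3) certified_dominating_subset[OF assms(2)]
    unfolding minimal_certified_dominating_def by blast
  then have "card (V - D') \<noteq> 0"
    using sub assms(1) by auto
  moreover have "card (V - D') \<noteq> 1"
    using card_Diff_certified_dominating_ne_1[OF C'] .
  moreover have "card (V - D') = card V - card D'"
    using sub assms(1) by (meson card_Diff_subset finite_subset)
  ultimately show ?thesis by linarith
qed

lemma card_eq_card_minus_2_iff:
  assumes "finite V" "D \<subseteq> V" "card V \<ge> 2"
  shows "card D = card V - 2 \<longleftrightarrow> (\<exists>x\<in>V. \<exists>y\<in>V. x \<noteq> y \<and> D = V - {x, y})"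
proof
  assume "card D = card V - 2"
  then have "card (V - D) = 2"
    using assms by (simp add: card_Diff_subset finite_subset)
  then obtain x y where "V - D = {x, y}" "x \<noteq> y" by (meson card_2_iff)
  moreover have "D = V - (V - D)" using assms(2) by blast
  ultimately show "\<exists>x\<in>V. \<exists>y\<in>V. x \<noteq> y \<and> D = V - {x, y}" by auto
next
  assume "\<exists>x\<in>V. \<exists>y\<in>V. x \<noteq> y \<and> D = V - {x, y}"
  then show "card D = card V - 2" using assms(1) by (auto simp: card_Diff_subset)
qed

lemma Gamma_cer_eq_card_minus_2_iff_exists:
  assumes fin: "finite V" and n: "card V \<ge> 2"
  shows "Gamma_cer V E = card V - 2 \<longleftrightarrow>
    (\<exists>D. minimal_certified_dominating V E D \<and> card D = card V - 2)"
proof -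
  define M where "M = {card D | D. minimal_certified_dominating V E D}"
  have "M \<subseteq> {..card V}"
  proof
    fix k assume "k \<in> M"
    then obtain D where "minimal_certified_dominating V E D" "k = card D"
      unfolding M_def by blast
    then have "D \<subseteq> V" "k = card D"
      using certified_dominating_subset unfolding minimal_certified_dominating_def by auto
    then show "k \<in> {..card V}" using card_mono[OF fin] by simp
  qed
  then have "finite M" using finite_subset by blast
  have "M \<noteq> {}" using ex_minimal_certified_dominating[OF fin] unfolding M_def by blast
  have "Gamma_cer V E = Max M" unfolding Gamma_cer_def M_def ..
  also have "\<dots> = card V - 2 \<longleftrightarrow> card V - 2 \<in> M"
  proof
    show "Max M = card V - 2 \<Longrightarrow> card V - 2 \<in> M"
      using Max_in[OF \<open>finite M\<close> \<open>M \<noteq> {}\<close>] by simp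
  next
    assume "card V - 2 \<in> M"
    then obtain D where D: "minimal_certified_dominating V E D" "card D = card V - 2"
      unfolding M_def by auto
    then have "certified_dominating V E D" "D \<noteq> V"
      using n unfolding minimal_certified_dominating_def by auto
    then have "k \<le> card V - 2" if "k \<in> M" for k
      using that card_minimal_certified_dominating_le[OF fin] unfolding M_def by auto
    then show "Max M = card V - 2"
      using Max_eqI[OF \<open>finite M\<close>] \<open>card V - 2 \<in> M\<close> by blast
  qed
  also have "\<dots> \<longleftrightarrow> (\<exists>D. minimal_certified_dominating V E D \<and> card D = card V - 2)"
    unfolding M_def by (auto intro: sym)
  finally show ?thesis .
qed

lemma Gamma_cer_eq_card_minus_2_iff:
  assumes fin: "finite V" and n: "card V \<ge> 2"
  shows "Gamma_cer V E = card V - 2 \<longleftrightarrow>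
    (\<exists>x\<in>V. \<exists>y\<in>V. x \<noteq> y \<and> minimal_certified_dominating V E (V - {x, y}))"
  unfolding Gamma_cer_eq_card_minus_2_iff_exists[OF fin n]
proof
  assume "\<exists>D. minimal_certified_dominating V E D \<and> card D = card V - 2"
  then obtain D where D: "minimal_certified_dominating V E D" "card D = card V - 2" by blast
  then have "D \<subseteq> V"
    using certified_dominating_subset unfolding minimal_certified_dominating_def by blast
  then obtain x y where "x \<in> V" "y \<in> V" "x \<noteq> y" "D = V - {x, y}"
    using card_eq_card_minus_2_iff[OF fin _ n] D(2) by blast
  then show "\<exists>x\<in>V. \<exists>y\<in>V. x \<noteq> y \<and> minimal_certified_dominating V E (V - {x, y})"
    using D(1) by blast
next
  assume "\<exists>x\<in>V. \<exists>y\<in>V. x \<noteq> y \<and> minimal_certified_dominating V E (V - {x, y})"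
  then obtain x y where xy: "x \<in> V" "y \<in> V" "x \<noteq> y"
    and "minimal_certified_dominating V E (V - {x, y})" by blast
  moreover have "card (V - {x, y}) = card V - 2"
    using card_eq_card_minus_2_iff[OF fin _ n, of "V - {x, y}"] xy by blast
  ultimately show "\<exists>D. minimal_certified_dominating V E D \<and> card D = card V - 2" by blast
qed

lemma certified_dominating_Diff_pair_iff:
  assumes "x \<in> V" "y \<in> V" "x \<noteq> y"
  shows "certified_dominating V E (V - {x, y}) \<longleftrightarrow>
    (\<exists>u\<in>V - {x, y}. E u x) \<and> (\<forall>v\<in>V - {x, y}. E v x \<longleftrightarrow> E v y)"
proof -
  have outside: "V - (V - {x, y}) = {x, y}" using assms by auto
  have count: "(card {u \<in> {x, y}. E v u} = 0 \<or> card {u \<in> {x, y}. E v u} \<ge> 2) \<longleftrightarrow>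
      (E v x \<longleftrightarrow> E v y)" for v
  proof -
    have "{u \<in> {x, y}. E v u} = (if E v x then {x} else {}) \<union> (if E v y then {y} else {})"
      by auto
    then show ?thesis using assms(3) by auto
  qed
  show ?thesis
    unfolding certified_dominating_def dominating_def outside count by auto
qed

lemma certified_dominating_Diff:
  assumes G: "graph V E" and C: "certified_dominating V E D" and "W \<subseteq> D"
    and inner: "\<forall>w\<in>W. \<exists>u\<in>D - W. E w u"
    and outer: "\<forall>v\<in>V - D. \<exists>u\<in>D - W. E u v"
    and counts: "\<forall>v\<in>D - W. nbrs (V - D) E v = {} \<longrightarrow> card (nbrs W E v) \<noteq> 1"
  shows "certified_dominating V E (D - W)"
proof -
  have DV: "D \<subseteq> V" using certified_dominating_subset[OF C] .
  have fin: "finite V" using G unfolding graph_def by blast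
  have "\<exists>u\<in>D - W. E u v" if "v \<in> V - (D - W)" for v
  proof (cases "v \<in> W")
    case True
    then obtain u where "u \<in> D - W" "E v u" using inner by blast
    then show ?thesis using graph_symp[OF G] by (auto dest: sympD)
  next
    case False
    then show ?thesis using that outer by blast
  qed
  moreover have "card (nbrs (V - (D - W)) E v) = 0 \<or> card (nbrs (V - (D - W)) E v) \<ge> 2"
    if v: "v \<in> D - W" for v
  proof -
    have split: "nbrs (V - (D - W)) E v = nbrs (V - D) E v \<union> nbrs W E v"
      using DV \<open>W \<subseteq> D\<close> unfolding nbrs_def by auto
    have "finite (nbrs (V - (D - W)) E v)" using fin unfolding nbrs_def by simp
    show ?thesis
    proof (cases "nbrs (V - D) E v = {}")
      case True
      then show ?thesis using split counts v by auto
    next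
      case False
      then have "card (nbrs (V - D) E v) \<ge> 2"
        using C v fin unfolding certified_dominating_def nbrs_def by auto
      then show ?thesis
        using split card_mono[OF \<open>finite (nbrs (V - (D - W)) E v)\<close>, of "nbrs (V - D) E v"]
        by auto
    qed
  qed
  ultimately show ?thesis
    using DV unfolding certified_dominating_def dominating_def nbrs_def by auto
qed

lemma certified_dominating_support:
  assumes G: "graph V E" and C: "certified_dominating V E D" and leaf: "nbrs V E p = {q}"
  shows "q \<in> D"
proof (rule ccontr)
  assume "q \<notin> D"
  have "p \<in> V" "q \<in> V" "E p q" using leaf graph_edgeD[OF G] unfolding nbrs_def by auto
  show False
  proof (cases "p \<in> D")
    case True
    then have "nbrs (V - D) E p = {q}" using leaf \<open>q \<notin> D\<close> \<open>q \<in> V\<close> unfolding nbrs_def by auto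
    then show False using certified_dominating_no_single_outer_nbr[OF C True] by blast
  next
    case False
    then obtain u where "u \<in> D" "E u p"
      using C \<open>p \<in> V\<close> unfolding certified_dominating_def dominating_def by blast
    then have "u \<in> nbrs V E p"
      using certified_dominating_subset[OF C] graph_symp[OF G] unfolding nbrs_def
      by (auto dest: sympD)
    then show False using leaf \<open>u \<in> D\<close> \<open>q \<notin> D\<close> by auto
  qed
qed

lemma connected_graph_closed_subset:
  assumes "connected_graph V E" and closed: "\<forall>a\<in>C. \<forall>b. E a b \<longrightarrow> b \<in> C"
    and "a \<in> C" "a \<in> V" "b \<in> V"
  shows "b \<in> C"
proof -
  have "E\<^sup>*\<^sup>* a b" using assms(1,4,5) unfolding connected_graph_def by blast
  then show ?thesis using closed \<open>a \<in> C\<close> by (induction rule: rtranclp_induct) auto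
qed

section \<open>Coronas, diadems and joins\<close>

lemma corona_with_leaf_nbrs:
  assumes "symp E" "corona_with V E S l" "t \<in> S"
  shows "nbrs V E (l t) = {t}"
proof -
  have S: "S \<subseteq> V" "inj_on l S" "l ` S = V - S"
    and supp: "\<forall>a\<in>S. \<forall>b\<in>V - S. E a b \<longleftrightarrow> b = l a"
    and indep: "\<forall>a\<in>V - S. \<forall>b\<in>V - S. \<not> E a b"
    using assms(2) unfolding corona_with_def bij_betw_def by auto
  have lt: "l t \<in> V - S" using S(3) assms(3) by blast
  have "E (l t) u \<longleftrightarrow> u = t" if "u \<in> V" for u
  proof (cases "u \<in> S")
    case True
    then have "E u (l t) \<longleftrightarrow> l t = l u" using supp lt by blast
    moreover have "E (l t) u \<longleftrightarrow> E u (l t)" using assms(1) by (auto dest: sympD)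
    moreover have "l t = l u \<longleftrightarrow> u = t" using S(2) True assms(3) by (auto dest: inj_onD)
    ultimately show ?thesis by blast
  next
    case False
    then show ?thesis using indep lt that assms(3) by auto
  qed
  then show ?thesis using S(1) assms(3) unfolding nbrs_def by auto
qed

lemma corona_withI:
  assumes "symp E" "S \<subseteq> V" "inj_on l S" "l ` S = V - S"
    and leaves: "\<forall>t\<in>S. nbrs V E (l t) = {t}"
  shows "corona_with V E S l"
proof -
  have leaf_adj: "E a (l t) \<longleftrightarrow> a = t" if "t \<in> S" "a \<in> V" for a t
    using leaves that assms(1) unfolding nbrs_def by (auto dest: sympD)
  have "E a b \<longleftrightarrow> b = l a" if a: "a \<in> S" and b: "b \<in> V - S" for a b
  proof -
    obtain t where t: "t \<in> S" "b = l t" using b assms(4) by blast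
    then have "E a b \<longleftrightarrow> a = t" using leaf_adj a assms(2) by blast
    also have "\<dots> \<longleftrightarrow> l a = l t" using assms(3) t(1) a by (auto dest: inj_onD)
    finally show ?thesis using t(2) by auto
  qed
  moreover have "\<not> E a b" if a: "a \<in> V - S" and b: "b \<in> V - S" for a b
  proof
    assume "E a b"
    obtain t where "t \<in> S" "b = l t" using b assms(4) by blast
    then show False using leaf_adj \<open>E a b\<close> a by blast
  qed
  ultimately show ?thesis
    using assms(2-4) unfolding corona_with_def bij_betw_def by blast
qed

lemma minimal_certified_dominating_join:
  assumes G: "graph V E" and n: "card V \<ge> 3" and "a \<noteq> b"
    and J: "join_with_independent V E {a, b}"
  shows "minimal_certified_dominating V E (V - {a, b})"
proof -
  have ab: "a \<in> V" "b \<in> V"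
    and adj: "\<forall>p\<in>{a, b}. \<forall>q\<in>V - {a, b}. E p q"
    and indep: "\<forall>p\<in>V - {a, b}. \<forall>q\<in>V - {a, b}. \<not> E p q"
    using J unfolding join_with_independent_def by auto
  have "card (V - {a, b}) = card V - 2"
    using ab \<open>a \<noteq> b\<close> by (simp add: card_Diff_subset)
  then have "card (V - {a, b}) > 0" using n by linarith
  then obtain c where c: "c \<in> V - {a, b}" by (metis card_gt_0_iff ex_in_conv)
  have "certified_dominating V E (V - {a, b})"
    using certified_dominating_Diff_pair_iff[OF ab \<open>a \<noteq> b\<close>] c adj graph_symp[OF G]
    by (auto dest: sympD)
  moreover have "\<not> certified_dominating V E D'" if D': "D' \<subset> V - {a, b}" for D'
  proof
    assume "certified_dominating V E D'"
    moreover obtain d where "d \<in> V - {a, b}" "d \<notin> D'" using D' by blast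
    ultimately obtain u where "u \<in> D'" "E u d"
      unfolding certified_dominating_def dominating_def by blast
    then show False using indep D' \<open>d \<in> V - {a, b}\<close> by blast
  qed
  ultimately show ?thesis unfolding minimal_certified_dominating_def by blast
qed

text \<open>Both kinds of diadem: \<open>w\<close> is joined to the support \<open>s\<close> and possibly to its leaf.\<close>
locale corona_plus_vertex =
  fixes V :: "'a set" and E :: "'a \<Rightarrow> 'a \<Rightarrow> bool" and w :: 'a and S :: "'a set"
    and l :: "'a \<Rightarrow> 'a" and s :: 'a
  assumes G: "graph V E" and w: "w \<in> V" and cor: "corona_with (V - {w}) E S l" and s: "s \<in> S"
    and ws: "E w s" and w_nbrs: "\<forall>u. E w u \<longrightarrow> u = s \<or> u = l s"
begin

lemma symE: "symp E"
  using graph_symp[OF G] .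

lemma S_subset: "S \<subseteq> V - {w}"
  and inj_l: "inj_on l S"
  and leaves: "l ` S = V - {w} - S"
  and support_adj: "\<forall>a\<in>S. \<forall>b\<in>V - {w} - S. E a b \<longleftrightarrow> b = l a"
  using cor unfolding corona_with_def bij_betw_def by auto

lemma leaf_s: "l s \<in> V - {w} - S"
  using leaves s by blast

lemma adj_w: "E v w \<Longrightarrow> v = s \<or> v = l s"
  using w_nbrs symE by (auto dest: sympD)

lemma nbrs_leaf: "t \<in> S \<Longrightarrow> t \<noteq> s \<Longrightarrow> nbrs V E (l t) = {t}"
proof -
  assume t: "t \<in> S" "t \<noteq> s"
  then have "l t \<noteq> l s" "l t \<noteq> s" using inj_l leaves s by (auto dest: inj_onD)
  then have "\<not> E (l t) w" using adj_w by blast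
  then show "nbrs V E (l t) = {t}"
    using corona_with_leaf_nbrs[OF symE cor t(1)] unfolding nbrs_def by auto
qed

lemma certified_dominating: "certified_dominating V E (V - {w, l s})"
proof -
  have leaf: "nbrs (V - {w}) E (l s) = {s}" using corona_with_leaf_nbrs[OF symE cor s] .
  have "E v w \<longleftrightarrow> E v (l s)" if v: "v \<in> V - {w, l s}" for v
  proof
    assume "E v w"
    then have "v = s" using adj_w v by blast
    then show "E v (l s)" using leaf unfolding nbrs_def by (auto intro: sympD[OF symE])
  next
    assume "E v (l s)"
    then have "v = s" using leaf v symE unfolding nbrs_def by (auto dest: sympD)
    then show "E v w" using ws symE by (auto dest: sympD)
  qed
  moreover have "s \<in> V - {w, l s}" "E s w" using S_subset s leaf_s ws symE by (auto dest: sympD)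
  ultimately show ?thesis
    using certified_dominating_Diff_pair_iff[of w V "l s" E] w leaf_s by blast
qed

text \<open>A certified dominating set inside \<open>V - {w, l s}\<close> contains every support (the leaves
are forced to be dominated, and \<open>w\<close> only by \<open>s\<close>); a missing leaf \<open>l t\<close> would then be the
only outside neighbour of \<open>t\<close>.\<close>
lemma no_smaller_certified_dominating:
  assumes D': "D' \<subset> V - {w, l s}"
  shows "\<not> certified_dominating V E D'"
proof
  assume C: "certified_dominating V E D'"
  have "t \<in> D'" if t: "t \<in> S" for t
  proof (cases "t = s")
    case True
    obtain u where "u \<in> D'" "E u w"
      using C w D' unfolding certified_dominating_def dominating_def by blast
    then show ?thesis using adj_w D' True by blast
  next
    case False
    then show ?thesis using certified_dominating_support[OF G C nbrs_leaf[OF t]] by blast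
  qed
  then have "S \<subseteq> D'" by blast
  obtain c where c: "c \<in> V - {w, l s}" "c \<notin> D'" using D' by blast
  then obtain t where t: "t \<in> S" "c = l t" "t \<noteq> s" using leaves \<open>S \<subseteq> D'\<close> by blast
  have "u = l t" if u: "u \<in> V - D'" "E t u" for u
  proof -
    have "u \<noteq> w" using adj_w[of t] u(2) t(1,3) leaf_s symE by (auto dest: sympD)
    then show ?thesis using support_adj t(1) u \<open>S \<subseteq> D'\<close> by blast
  qed
  moreover have "l t \<in> V - D'" "E t (l t)" using c t support_adj leaf_s leaves by auto
  ultimately have "nbrs (V - D') E t = {l t}" unfolding nbrs_def by blast
  then show False
    using certified_dominating_no_single_outer_nbr[OF C] \<open>S \<subseteq> D'\<close> t(1) by blast
qed

lemma ex_minimal_certified_dominating_pair: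
  "\<exists>a\<in>V. \<exists>b\<in>V. a \<noteq> b \<and> minimal_certified_dominating V E (V - {a, b})"
proof -
  have "minimal_certified_dominating V E (V - {w, l s})"
    using certified_dominating no_smaller_certified_dominating
    unfolding minimal_certified_dominating_def by blast
  moreover have "l s \<in> V" "w \<noteq> l s" using leaf_s by auto
  ultimately show ?thesis using w by blast
qed

end

lemma corona_plus_vertex_if_diadem:
  assumes "graph V E" "simple_diadem V E \<or> diadem V E"
  shows "\<exists>w S l s. corona_plus_vertex V E w S l s"
  using assms unfolding simple_diadem_def diadem_def corona_plus_vertex_def by blast

lemma ex_minimal_certified_dominating_pair:
  assumes G: "graph V E" and n: "card V \<ge> 3"
    and "simple_diadem V E \<or> diadem V E \<or> K2_join_indep V E \<or> coK2_join_indep V E"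
  shows "\<exists>x\<in>V. \<exists>y\<in>V. x \<noteq> y \<and> minimal_certified_dominating V E (V - {x, y})"
proof (cases "simple_diadem V E \<or> diadem V E")
  case True
  then obtain w S l s where "corona_plus_vertex V E w S l s"
    using corona_plus_vertex_if_diadem[OF G] by blast
  then show ?thesis by (rule corona_plus_vertex.ex_minimal_certified_dominating_pair)
next
  case False
  then obtain a b where ab: "a \<noteq> b" "join_with_independent V E {a, b}"
    using assms(3) unfolding K2_join_indep_def coK2_join_indep_def by blast
  then have "a \<in> V" "b \<in> V" unfolding join_with_independent_def by auto
  then show ?thesis using minimal_certified_dominating_join[OF G n ab] ab(1) by blast
qed

section \<open>Removable sets\<close>

definition outer_adjacent :: "'a set \<Rightarrow> ('a \<Rightarrow> 'a \<Rightarrow> bool) \<Rightarrow> 'a set \<Rightarrow> bool" where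
  "outer_adjacent V F W \<longleftrightarrow> (\<forall>w\<in>W. \<exists>u\<in>V - W. F w u)"

text \<open>Used with \<open>V\<close> a certified dominating set \<open>D = V\<^sub>G - {x, y}\<close> and \<open>X\<close> the
common neighbourhood of \<open>x\<close> and \<open>y\<close> in it: a removable \<open>W\<close> missing a vertex of \<open>X\<close>
could be deleted from \<open>D\<close> (see \<open>minimal_pair.not_removable\<close>).\<close>
definition removable :: "'a set \<Rightarrow> ('a \<Rightarrow> 'a \<Rightarrow> bool) \<Rightarrow> 'a set \<Rightarrow> 'a set \<Rightarrow> bool" where
  "removable V F X W \<longleftrightarrow> W \<noteq> {} \<and> W \<subseteq> V \<and> outer_adjacent V F W \<and>
     (\<forall>v\<in>V - W - X. card (nbrs W F v) \<noteq> 1)"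

definition pendant_pairs ::
    "'a set \<Rightarrow> ('a \<Rightarrow> 'a \<Rightarrow> bool) \<Rightarrow> 'a set \<Rightarrow> 'a set \<Rightarrow> ('a \<Rightarrow> 'a) \<Rightarrow> bool" where
  "pendant_pairs V F Y S l \<longleftrightarrow> S \<subseteq> Y \<and> l ` S \<subseteq> Y - S \<and> inj_on l S \<and>
     (\<forall>t\<in>S. nbrs V F (l t) = {t}) \<and> (\<forall>r\<in>Y - S - l ` S. nbrs V F r = {})"

definition edges_in :: "('a \<Rightarrow> 'a \<Rightarrow> bool) \<Rightarrow> 'a set \<Rightarrow> ('a \<times> 'a) set" where
  "edges_in F W = {(a, b) \<in> W \<times> W. F a b}"

lemma outer_adjacent_insert:
  assumes "symp F" "outer_adjacent V F W" "nbrs W F v = {w0}"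
    and "u1 \<in> V - insert v W" "F v u1" "u \<in> V - insert v W" "F w0 u"
  shows "outer_adjacent V F (insert v W)"
  unfolding outer_adjacent_def
proof
  fix w assume w: "w \<in> insert v W"
  show "\<exists>u\<in>V - insert v W. F w u"
  proof (cases "w = v \<or> w = w0")
    case True
    then show ?thesis using assms(4-7) by blast
  next
    case False
    then obtain u' where u': "u' \<in> V - W" "F w u'"
      using w assms(2) unfolding outer_adjacent_def by blast
    have "u' \<noteq> v"
      using u' w False assms(1,3) unfolding nbrs_def by (auto dest: sympD)
    then show ?thesis using u' by blast
  qed
qed

lemma outer_adjacent_exchange:
  assumes "symp F" "outer_adjacent V F W" "W \<subseteq> V" "v \<in> V - W" "nbrs W F v = {w0}"
  shows "outer_adjacent V F (insert v (W - {w0}))"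
  unfolding outer_adjacent_def
proof
  fix w assume w: "w \<in> insert v (W - {w0})"
  show "\<exists>u\<in>V - insert v (W - {w0}). F w u"
  proof (cases "w = v")
    case True
    then show ?thesis using assms(3-5) unfolding nbrs_def by auto
  next
    case False
    then obtain u' where u': "u' \<in> V - W" "F w u'"
      using w assms(2) unfolding outer_adjacent_def by blast
    have "u' \<noteq> v"
      using u' w False assms(1,5) unfolding nbrs_def by (auto dest: sympD)
    then show ?thesis using u' by blast
  qed
qed

lemma card_edges_in_exchange_less:
  assumes "symp F" "irreflp F" "finite W" "v \<notin> W" "nbrs W F v = {w0}"
    and "u2 \<in> W" "F w0 u2"
  shows "card (edges_in F (insert v (W - {w0}))) < card (edges_in F W)"
proof -
  have "\<not> F v w \<and> \<not> F w v" if "w \<in> insert v (W - {w0})" for w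
    using that assms(1,2,5) unfolding nbrs_def by (auto dest: sympD irreflpD)
  then have "edges_in F (insert v (W - {w0})) \<subseteq> edges_in F W - {(w0, u2)}"
    unfolding edges_in_def by auto
  moreover have "(w0, u2) \<in> edges_in F W"
    using assms(5-7) unfolding edges_in_def nbrs_def by auto
  moreover have "finite (edges_in F W)"
    using assms(3) unfolding edges_in_def by (auto intro: finite_subset[of _ "W \<times> W"])
  ultimately show ?thesis
    by (meson card_Diff1_less card_mono finite_Diff order_le_less_trans)
qed

text \<open>When every vertex of \<open>V - X\<close> has degree other than 1, a vertex \<open>v\<close> with a single
neighbour \<open>w0\<close> in \<open>W\<close> can be added to \<open>W\<close> or exchanged for \<open>w0\<close>, losing an inner edge.\<close>
lemma outer_adjacent_improve:
  assumes fin: "finite V" and F: "symp F" "irreflp F"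
    and deg: "\<forall>r\<in>V - X. card (nbrs V F r) \<noteq> 1"
    and W: "W \<subseteq> V - X" "outer_adjacent V F W"
    and v: "v \<in> V - W - X" and w0: "nbrs W F v = {w0}"
  shows "outer_adjacent V F (insert v W) \<or>
    outer_adjacent V F (insert v (W - {w0})) \<and>
    card (edges_in F (insert v (W - {w0}))) < card (edges_in F W)"
proof -
  have w0W: "w0 \<in> W" and "F v w0" using w0 unfolding nbrs_def by auto
  have "nbrs V F v \<noteq> {w0}"
    using deg v by (metis DiffD1 DiffD2 DiffI is_singletonI is_singleton_altdef)
  moreover have "w0 \<in> nbrs V F v" using w0W W(1) \<open>F v w0\<close> unfolding nbrs_def by auto
  ultimately obtain u1 where u1: "u1 \<in> nbrs V F v" "u1 \<noteq> w0" by blast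
  have u1': "u1 \<in> V - insert v W" "F v u1"
    using u1 w0 F(2) unfolding nbrs_def by (auto dest: irreflpD)
  show ?thesis
  proof (cases "\<exists>u\<in>V - insert v W. F w0 u")
    case True
    then show ?thesis using outer_adjacent_insert[OF F(1) W(2) w0 u1'] by blast
  next
    case False
    have "F w0 v" using \<open>F v w0\<close> F(1) by (auto dest: sympD)
    moreover have "nbrs V F w0 \<noteq> {v}"
      using deg w0W W(1) by (metis Diff_iff is_singletonI is_singleton_altdef subsetD)
    ultimately obtain u2 where u2: "u2 \<in> V" "F w0 u2" "u2 \<noteq> v"
      using v unfolding nbrs_def by auto
    then have "u2 \<in> W" using False by blast
    have "finite W" using W(1) fin finite_subset by blast
    then show ?thesis
      using outer_adjacent_exchange[OF F(1) W(2) _ _ w0] W(1) v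
        card_edges_in_exchange_less[OF F _ _ w0 \<open>u2 \<in> W\<close> u2(2)] by blast
  qed
qed

text \<open>Among the nonempty outer-adjacent subsets of \<open>V - X\<close>, one of maximum size and,
subject to this, with fewest inner edges is removable.\<close>
lemma ex_removable:
  assumes fin: "finite V" and F: "symp F" "irreflp F"
    and deg: "\<forall>r\<in>V - X. card (nbrs V F r) \<noteq> 1"
    and r0: "r0 \<in> V - X" "u0 \<in> V" "F r0 u0"
  shows "\<exists>W\<subseteq>V - X. removable V F X W"
proof -
  define P where "P = {W. W \<noteq> {} \<and> W \<subseteq> V - X \<and> outer_adjacent V F W}"
  have "{r0} \<in> P"
    using r0 F(2) unfolding P_def outer_adjacent_def by (auto dest: irreflpD)
  have "finite P"
    using fin unfolding P_def by (auto intro: finite_subset[of _ "Pow V"])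
  define m where "m = Max (card ` P)"
  have maxc: "card W \<le> m" if "W \<in> P" for W
    unfolding m_def using \<open>finite P\<close> that by simp
  obtain W1 where "W1 \<in> P" "card W1 = m"
    using Max_in[of "card ` P"] \<open>finite P\<close> \<open>{r0} \<in> P\<close> unfolding m_def by fastforce
  then obtain W where W: "W \<in> P" "card W = m"
    and minW: "\<And>W'. W' \<in> P \<Longrightarrow> card W' = m \<Longrightarrow>
      card (edges_in F W) \<le> card (edges_in F W')"
    using ex_has_least_nat[of "\<lambda>W. W \<in> P \<and> card W = m" W1 "\<lambda>W. card (edges_in F W)"]
    by blast
  have WV: "W \<subseteq> V - X" and "W \<noteq> {}" and out: "outer_adjacent V F W"
    using W(1) unfolding P_def by auto
  have finW: "finite W" using WV fin finite_subset by blast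
  have "card (nbrs W F v) \<noteq> 1" if v: "v \<in> V - W - X" for v
  proof
    assume "card (nbrs W F v) = 1"
    then obtain w0 where w0: "nbrs W F v = {w0}" using card_1_singletonE by blast
    then have "w0 \<in> W" unfolding nbrs_def by auto
    have "insert v W \<notin> P" using maxc v finW W(2) by fastforce
    moreover have "card (insert v (W - {w0})) = m"
      using finW \<open>w0 \<in> W\<close> v W(2)
      by (metis Diff_iff card_Suc_Diff1 card_insert_disjoint finite_Diff)
    then have "insert v (W - {w0}) \<notin> P \<or>
        card (edges_in F W) \<le> card (edges_in F (insert v (W - {w0})))"
      using minW by blast
    ultimately show False
      using outer_adjacent_improve[OF fin F deg WV out v w0] v WV unfolding P_def by auto
  qed
  then show ?thesis
    using WV \<open>W \<noteq> {}\<close> out unfolding removable_def by blast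
qed

lemma removable_leaf:
  assumes "symp F" "r \<in> V - X" "nbrs V F r = {t}" "t \<in> X"
  shows "removable V F X {r}"
proof -
  have "nbrs {r} F v = {}" if "v \<in> V - {r} - X" for v
    using that assms unfolding nbrs_def by (auto dest: sympD)
  moreover have "t \<in> V - {r}" "F r t"
    using assms(2-4) unfolding nbrs_def by auto
  ultimately show ?thesis
    using assms(2) unfolding removable_def outer_adjacent_def by auto
qed

lemma outer_adjacent_insert_leaf:
  assumes F: "symp F" "irreflp F" and r: "nbrs V F r = {t}" "r \<notin> W" "t \<notin> W"
    and W: "W \<subseteq> V" "outer_adjacent V F W"
  shows "outer_adjacent V F (insert r W)"
  unfolding outer_adjacent_def
proof
  have "t \<in> V" "t \<noteq> r" "F r t" using r(1) F(2) unfolding nbrs_def by (auto dest: irreflpD)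
  fix w assume "w \<in> insert r W"
  then show "\<exists>u\<in>V - insert r W. F w u"
  proof
    assume "w = r"
    then show ?thesis using \<open>t \<in> V\<close> \<open>t \<noteq> r\<close> \<open>F r t\<close> r(3) by blast
  next
    assume "w \<in> W"
    then obtain u where u: "u \<in> V - W" "F w u" using W(2) unfolding outer_adjacent_def by blast
    have "u \<noteq> r" using u \<open>w \<in> W\<close> W(1) r F(1) unfolding nbrs_def by (auto dest: sympD)
    then show ?thesis using u by blast
  qed
qed

text \<open>Removability relative to \<open>X\<close> is inherited from removability relative to
\<open>X \<union> {r, t}\<close> when \<open>r\<close> is a leaf with support \<open>t\<close>: the leaf is added to \<open>W\<close> exactly
when \<open>t\<close> has a single neighbour in \<open>W\<close>.\<close>
lemma removable_remove_leaf:
  assumes F: "symp F" "irreflp F"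
    and r: "r \<in> V - X" "nbrs V F r = {t}" "t \<notin> X"
    and W: "W \<subseteq> V - (X \<union> {r, t})" "removable V F (X \<union> {r, t}) W"
  shows "removable V F X W \<or> removable V F X (insert r W)"
proof -
  have into_r: "v = t" if "v \<in> V" "F v r" for v
    using that r(2) F(1) unfolding nbrs_def by (auto dest: sympD)
  have counts: "\<forall>v\<in>V - W - (X \<union> {r, t}). card (nbrs W F v) \<noteq> 1"
    using W(2) unfolding removable_def by auto
  show ?thesis
  proof (cases "card (nbrs W F t) = 1")
    case False
    have "nbrs W F r = {}"
      using r(2) W(1) unfolding nbrs_def by auto
    then show ?thesis
      using W False counts unfolding removable_def by auto
  next
    case True
    have "outer_adjacent V F (insert r W)"
      using outer_adjacent_insert_leaf[OF F r(2)] W unfolding removable_def by blast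
    moreover have "card (nbrs (insert r W) F v) \<noteq> 1" if v: "v \<in> V - insert r W - X" for v
    proof (cases "v = t")
      case True
      have "nbrs (insert r W) F t = insert r (nbrs W F t)"
        using r F(1) W(1) unfolding nbrs_def by (auto dest: sympD)
      moreover have "r \<notin> nbrs W F t" "finite (nbrs W F t)"
        using W(1) \<open>card (nbrs W F t) = 1\<close> unfolding nbrs_def by (auto intro: card_ge_0_finite)
      ultimately show ?thesis using True \<open>card (nbrs W F t) = 1\<close> by simp
    next
      case False
      then have "nbrs (insert r W) F v = nbrs W F v"
        using into_r[of v] v unfolding nbrs_def by auto
      then show ?thesis using counts v False by auto
    qed
    ultimately show ?thesis
      using W(2) r(1) unfolding removable_def by auto
  qed
qed

lemma pendant_pairs_insert:
  assumes "pendant_pairs V F (Y - {r, t}) S l" "r \<in> Y" "t \<in> Y" "r \<noteq> t" "nbrs V F r = {t}"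
  shows "pendant_pairs V F Y (insert t S) (l(t := r))"
proof -
  have S: "S \<subseteq> Y - {r, t}" "l ` S \<subseteq> Y - {r, t} - S" "inj_on l S"
    "\<forall>s\<in>S. nbrs V F (l s) = {s}" "\<forall>q\<in>Y - {r, t} - S - l ` S. nbrs V F q = {}"
    using assms(1) unfolding pendant_pairs_def by auto
  have img: "(l(t := r)) ` insert t S = insert r (l ` S)"
    using S(1) by (auto simp: image_iff)
  have "inj_on (l(t := r)) (insert t S)"
    using S(1-3) by (auto simp: inj_on_def)
  then show ?thesis
    unfolding pendant_pairs_def img using S assms(2-5) by auto
qed

text \<open>Induction on \<open>|V - X|\<close>: a leaf of \<open>V - X\<close> and its support are moved into \<open>X\<close>; without
leaves, \<open>ex_removable\<close> leaves only isolated vertices.\<close>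
lemma ex_pendant_pairs:
  assumes fin: "finite V" and F: "symp F" "irreflp F"
    and nonremovable: "\<forall>W\<subseteq>V - X. \<not> removable V F X W"
  shows "\<exists>S l. pendant_pairs V F (V - X) S l"
  using nonremovable
proof (induction "card (V - X)" arbitrary: X rule: less_induct)
  case less
  show ?case
  proof (cases "\<exists>r\<in>V - X. card (nbrs V F r) = 1")
    case True
    then obtain r where r: "r \<in> V - X" "card (nbrs V F r) = 1" by blast
    then obtain t where rt: "nbrs V F r = {t}" using card_1_singletonE by blast
    then have "t \<in> V" "r \<noteq> t" using F(2) unfolding nbrs_def by (auto dest: irreflpD)
    have "t \<notin> X" using removable_leaf[OF F(1) r(1) rt] less.prems r(1) by blast
    have "\<not> removable V F (X \<union> {r, t}) W" if W: "W \<subseteq> V - (X \<union> {r, t})" for W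
    proof
      assume "removable V F (X \<union> {r, t}) W"
      then have "removable V F X W \<or> removable V F X (insert r W)"
        using removable_remove_leaf[OF F r(1) rt \<open>t \<notin> X\<close> W] by blast
      moreover have "insert r W \<subseteq> V - X" using W r(1) by blast
      ultimately show False using less.prems W by blast
    qed
    moreover have "card (V - (X \<union> {r, t})) < card (V - X)"
      using r(1) \<open>t \<in> V\<close> \<open>t \<notin> X\<close> fin by (intro psubset_card_mono) auto
    ultimately obtain S l where "pendant_pairs V F (V - (X \<union> {r, t})) S l"
      using less.hyps by blast
    moreover have "V - (X \<union> {r, t}) = V - X - {r, t}" by blast
    ultimately have "pendant_pairs V F (V - X) (insert t S) (l(t := r))"
      using pendant_pairs_insert[of V F "V - X" r t S l] r(1) rt \<open>t \<in> V\<close> \<open>t \<notin> X\<close>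
        \<open>r \<noteq> t\<close>
      by simp
    then show ?thesis by blast
  next
    case False
    have "nbrs V F r = {}" if "r \<in> V - X" for r
    proof (rule ccontr)
      assume "nbrs V F r \<noteq> {}"
      then obtain u where "u \<in> V" "F r u" unfolding nbrs_def by auto
      then have "\<exists>W\<subseteq>V - X. removable V F X W"
        using ex_removable[OF fin F _ that] False by blast
      then show False using less.prems by blast
    qed
    then show ?thesis
      unfolding pendant_pairs_def by (intro exI[of _ "{}"]) auto
  qed
qed

section \<open>Minimal certified dominating sets of order \<open>n - 2\<close>\<close>

locale minimal_pair =
  fixes V :: "'a set" and E :: "'a \<Rightarrow> 'a \<Rightarrow> bool" and x y :: 'a
  assumes G: "graph V E" and conn: "connected_graph V E"
    and xV: "x \<in> V" and yV: "y \<in> V" and xy: "x \<noteq> y"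
    and min: "minimal_certified_dominating V E (V - {x, y})"
begin

abbreviation D :: "'a set" where "D \<equiv> V - {x, y}"

abbreviation N :: "'a set" where "N \<equiv> nbrs D E x"

lemma symE: "symp E"
  using graph_symp[OF G] .

lemma N_nonempty: "N \<noteq> {}"
  and twin: "v \<in> D \<Longrightarrow> E v x \<longleftrightarrow> E v y"
  using min certified_dominating_Diff_pair_iff[OF xV yV xy] symE
  unfolding minimal_certified_dominating_def nbrs_def by (auto dest: sympD)

lemma in_N_iff: "v \<in> N \<longleftrightarrow> v \<in> D \<and> E v x"
  using symE unfolding nbrs_def by (auto dest: sympD)

lemma nbrs_outside_N: "r \<in> D - N \<Longrightarrow> nbrs V E r = nbrs D E r"
  using twin symE unfolding nbrs_def by (auto dest: sympD)

lemma not_removable: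
  assumes "W \<subseteq> D" "\<not> N \<subseteq> W"
  shows "\<not> removable D E N W"
proof
  assume R: "removable D E N W"
  obtain m where m: "m \<in> N" "m \<notin> W" using assms(2) by blast
  have "certified_dominating V E (D - W)"
  proof (rule certified_dominating_Diff[OF G _ assms(1)])
    show "certified_dominating V E D" using min unfolding minimal_certified_dominating_def ..
    show "\<forall>w\<in>W. \<exists>u\<in>D - W. E w u" using R unfolding removable_def outer_adjacent_def by blast
    show "\<forall>v\<in>V - D. \<exists>u\<in>D - W. E u v" using m twin in_N_iff by blast
    show "\<forall>v\<in>D - W. nbrs (V - D) E v = {} \<longrightarrow> card (nbrs W E v) \<noteq> 1"
    proof (intro ballI impI)
      fix v assume v: "v \<in> D - W" "nbrs (V - D) E v = {}"
      then have "v \<notin> N" using in_N_iff xV unfolding nbrs_def by auto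
      then show "card (nbrs W E v) \<noteq> 1" using R v(1) unfolding removable_def by blast
    qed
  qed
  moreover have "D - W \<subset> D" using R assms(1) unfolding removable_def by blast
  ultimately show False using min unfolding minimal_certified_dominating_def by blast
qed

lemma ex_pendant_pairs_D_minus_N: "\<exists>S l. pendant_pairs V E (D - N) S l"
proof -
  have fin: "finite D" using G unfolding graph_def by blast
  have "\<forall>W\<subseteq>D - N. \<not> removable D E N W"
  proof (intro allI impI)
    fix W assume "W \<subseteq> D - N"
    moreover have "\<not> N \<subseteq> W" using calculation N_nonempty by blast
    ultimately show "\<not> removable D E N W" using not_removable by blast
  qed
  then obtain S l where P: "pendant_pairs D E (D - N) S l"
    using ex_pendant_pairs[OF fin symE graph_irreflp[OF G]] by blast
  have "nbrs V E (l t) = {t}" if "t \<in> S" for t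
  proof -
    have "l t \<in> D - N" using P that unfolding pendant_pairs_def by blast
    then have "nbrs V E (l t) = nbrs D E (l t)" by (rule nbrs_outside_N)
    also have "\<dots> = {t}" using P that unfolding pendant_pairs_def by blast
    finally show ?thesis .
  qed
  moreover have "nbrs V E r = {}" if "r \<in> D - N - S - l ` S" for r
  proof -
    have "nbrs V E r = nbrs D E r" using that by (intro nbrs_outside_N) blast
    also have "\<dots> = {}" using P that unfolding pendant_pairs_def by blast
    finally show ?thesis .
  qed
  ultimately have "pendant_pairs V E (D - N) S l"
    using P unfolding pendant_pairs_def by simp
  then show ?thesis by blast
qed

lemma nbrs_x_if_one_nbr:
  assumes N: "N = {s}"
  shows "E x u \<longleftrightarrow> u = s \<or> (u = y \<and> E x y)"
proof
  assume "E x u"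
  then have "u \<in> V" "u \<noteq> x"
    using graph_edgeD[OF G] graph_irreflp[OF G] by (auto dest: irreflpD)
  then show "u = s \<or> (u = y \<and> E x y)" using \<open>E x u\<close> N unfolding nbrs_def by blast
next
  assume "u = s \<or> (u = y \<and> E x y)"
  then show "E x u" using N unfolding nbrs_def by blast
qed

lemma nbrs_y_if_one_nbr:
  assumes N: "N = {s}"
  shows "nbrs (V - {x}) E y = {s}"
proof -
  have sD: "s \<in> D" using N unfolding nbrs_def by blast
  have "u = s" if "u \<in> V - {x}" "E y u" for u
  proof -
    have "u \<noteq> y" using \<open>E y u\<close> graph_irreflp[OF G] by (auto dest: irreflpD)
    then have "u \<in> D" "E u y" using that symE by (auto dest: sympD)
    then show ?thesis using twin in_N_iff N by blast
  qed
  moreover have "E y s" "s \<in> V - {x}" using sD twin in_N_iff N symE by (auto dest: sympD)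
  ultimately show ?thesis unfolding nbrs_def by blast
qed

context
  fixes S l assumes P: "pendant_pairs V E (D - N) S l"
begin

lemma supports_subset: "S \<subseteq> D - N"
  and leaves_subset: "l ` S \<subseteq> D - N - S"
  and nbrs_leaf: "t \<in> S \<Longrightarrow> nbrs V E (l t) = {t}"
  using P unfolding pendant_pairs_def by auto

lemma adj_leaf: "t \<in> S \<Longrightarrow> a \<in> V \<Longrightarrow> E a (l t) \<longleftrightarrow> a = t"
  using nbrs_leaf symE unfolding nbrs_def by (auto dest: sympD)

lemma pendant_pairs_cover: "D - N = S \<union> l ` S"
proof
  show "S \<union> l ` S \<subseteq> D - N" using supports_subset leaves_subset by blast
  show "D - N \<subseteq> S \<union> l ` S"
  proof
    fix r assume r: "r \<in> D - N"
    show "r \<in> S \<union> l ` S"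
    proof (rule ccontr)
      assume "r \<notin> S \<union> l ` S"
      then have "nbrs V E r = {}" using P r unfolding pendant_pairs_def by blast
      then have "\<forall>a\<in>{r}. \<forall>b. E a b \<longrightarrow> b \<in> {r}"
        using graph_edgeD[OF G] unfolding nbrs_def by blast
      then have "x \<in> {r}" using connected_graph_closed_subset[OF conn _ _ _ xV] r by blast
      then show False using r by blast
    qed
  qed
qed

lemma nbrs_star_support:
  assumes e: "e \<in> N" and v: "v \<in> S"
  shows "nbrs (insert e (l ` {t \<in> S. E e t})) E v = (if E e v then {e, l v} else {})"
proof -
  have "v \<in> V" using v supports_subset by blast
  have "E v u \<longleftrightarrow> u = e \<and> E e v \<or> u = l v \<and> E e v"
    if "u \<in> insert e (l ` {t \<in> S. E e t})" for u
    using that adj_leaf[OF _ \<open>v \<in> V\<close>] v symE by (auto dest: sympD)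
  moreover have "l v \<in> insert e (l ` {t \<in> S. E e t})" if "E e v"
    using that v by blast
  ultimately show ?thesis unfolding nbrs_def by auto
qed

lemma nbrs_star_leaf:
  assumes e: "e \<in> N" and t: "t \<in> S"
  shows "nbrs (insert e (l ` {t \<in> S. E e t})) E (l t) = {}"
proof -
  have "t \<noteq> e" "t \<notin> l ` S" using t e supports_subset leaves_subset by blast+
  then have "t \<notin> insert e (l ` {t \<in> S. E e t})" by blast
  moreover have "insert e (l ` {t \<in> S. E e t}) \<subseteq> V"
    using e leaves_subset unfolding nbrs_def by blast
  moreover have "u = t" if "u \<in> V" "E (l t) u" for u
    using nbrs_leaf[OF t] that unfolding nbrs_def by blast
  ultimately show ?thesis unfolding nbrs_def by blast
qed

text \<open>A vertex \<open>e\<close> of \<open>N\<close> together with the leaves of its neighbouring supports: each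
support adjacent to \<open>e\<close> sees two of its vertices, every other vertex of \<open>D - N\<close> none.\<close>
lemma removable_star:
  assumes e: "e \<in> N" and r: "r \<in> S" "E e r"
  shows "removable D E N (insert e (l ` {t \<in> S. E e t}))"
proof -
  define W where "W = insert e (l ` {t \<in> S. E e t})"
  have lT: "l ` {t \<in> S. E e t} \<subseteq> D - N - S" using leaves_subset by blast
  have "e \<in> D" using e unfolding nbrs_def by blast
  then have "W \<subseteq> D" using lT unfolding W_def by blast
  moreover have "outer_adjacent D E W"
    unfolding outer_adjacent_def
  proof
    fix w assume "w \<in> W"
    then consider "w = e" | t where "t \<in> S" "w = l t" unfolding W_def by blast
    then show "\<exists>u\<in>D - W. E w u"
    proof cases
      case 1
      have "r \<in> D - W" using r supports_subset lT e unfolding W_def by blast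
      then show ?thesis using r(2) 1 by blast
    next
      case 2
      then have "t \<in> D - W" using supports_subset lT e unfolding W_def by blast
      moreover have "E (l t) t" using nbrs_leaf[OF \<open>t \<in> S\<close>] unfolding nbrs_def by blast
      ultimately show ?thesis using 2 by blast
    qed
  qed
  moreover have "card (nbrs W E v) \<noteq> 1" if v: "v \<in> D - W - N" for v
  proof -
    consider "v \<in> S" | t where "t \<in> S" "v = l t" using pendant_pairs_cover v by blast
    then show ?thesis
    proof cases
      case 1
      moreover have "e \<noteq> l v" using leaves_subset 1 e by blast
      ultimately show ?thesis using nbrs_star_support[OF e] unfolding W_def by simp
    next
      case 2
      then show ?thesis using nbrs_star_leaf[OF e] unfolding W_def by simp
    qed
  qed
  ultimately show ?thesis unfolding removable_def W_def by blast
qed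

lemma N_not_adjacent_rest:
  assumes e: "e \<in> N" "e' \<in> N" "e' \<noteq> e" and r: "r \<in> D - N"
  shows "\<not> E e r"
proof
  assume "E e r"
  have "r \<in> S"
  proof (rule ccontr)
    assume "r \<notin> S"
    then obtain t where "t \<in> S" "r = l t" using pendant_pairs_cover r by blast
    moreover have "e \<in> V" using e(1) unfolding nbrs_def by blast
    ultimately have "e = t" using adj_leaf \<open>E e r\<close> by blast
    then show False using \<open>t \<in> S\<close> supports_subset e(1) by blast
  qed
  then have "removable D E N (insert e (l ` {t \<in> S. E e t}))"
    using removable_star e(1) \<open>E e r\<close> by blast
  moreover have "insert e (l ` {t \<in> S. E e t}) \<subseteq> D"
    using leaves_subset e(1) unfolding nbrs_def by blast
  moreover have "\<not> N \<subseteq> insert e (l ` {t \<in> S. E e t})"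
    using e leaves_subset by blast
  ultimately show False using not_removable by blast
qed

lemma corona_if_one_nbr:
  assumes N: "N = {s}"
  shows "corona_with (V - {x}) E (insert s S) (l(s := y))"
proof -
  have sD: "s \<in> D" using N unfolding nbrs_def by blast
  have "D = insert s (S \<union> l ` S)" using pendant_pairs_cover N sD by blast
  moreover have "V - {x} = insert y D" using yV xy by blast
  moreover have "y \<notin> insert s S" "l ` S \<inter> insert s S = {}"
    using sD supports_subset leaves_subset N by blast+
  ultimately have rest: "V - {x} - insert s S = insert y (l ` S)" by blast
  have img: "(l(s := y)) ` insert s S = insert y (l ` S)"
    using supports_subset N by (auto simp: image_iff)
  have inj: "inj_on (l(s := y)) (insert s S)"
    using P supports_subset leaves_subset N unfolding pendant_pairs_def by (auto simp: inj_on_def)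
  have "\<forall>t\<in>insert s S. nbrs (V - {x}) E ((l(s := y)) t) = {t}"
  proof
    fix t assume "t \<in> insert s S"
    then consider "t = s" | "t \<in> S" "t \<noteq> s" by blast
    then show "nbrs (V - {x}) E ((l(s := y)) t) = {t}"
    proof cases
      case 1
      then show ?thesis using nbrs_y_if_one_nbr[OF N] by simp
    next
      case 2
      then have "nbrs V E (l t) = {t}" "t \<noteq> x" using nbrs_leaf supports_subset by auto
      then show ?thesis using 2 unfolding nbrs_def by auto
    qed
  qed
  moreover have "insert s S \<subseteq> V - {x}" using sD supports_subset by blast
  ultimately show ?thesis
    using corona_withI[OF symE _ inj] img rest by simp
qed

end

text \<open>With two vertices in \<open>N\<close>, no edge joins \<open>N\<close> to \<open>D - N\<close>, so \<open>D - N\<close> is closed under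
adjacency and connectivity empties it.\<close>
lemma D_subset_N_if_two_nbrs:
  assumes e: "e \<in> N" "e' \<in> N" "e' \<noteq> e"
  shows "D \<subseteq> N"
proof
  obtain S l where P: "pendant_pairs V E (D - N) S l"
    using ex_pendant_pairs_D_minus_N by blast
  have closed: "b \<in> D - N" if a: "a \<in> D - N" and "E a b" for a b
  proof -
    have "b \<in> nbrs V E a" using \<open>E a b\<close> graph_edgeD[OF G] unfolding nbrs_def by blast
    then have "b \<in> D" using nbrs_outside_N[OF a] unfolding nbrs_def by blast
    moreover have "b \<notin> N"
    proof
      assume "b \<in> N"
      moreover obtain e'' where "e'' \<in> N" "e'' \<noteq> b" using e by blast
      moreover have "E b a" using symE \<open>E a b\<close> by (rule sympD)
      ultimately show False using N_not_adjacent_rest[OF P _ _ _ a] by blast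
    qed
    ultimately show ?thesis by blast
  qed
  fix r assume "r \<in> D"
  show "r \<in> N"
  proof (rule ccontr)
    assume "r \<notin> N"
    then have "x \<in> D - N"
      using connected_graph_closed_subset[OF conn _ _ _ xV] closed \<open>r \<in> D\<close> by blast
    then show False by blast
  qed
qed

lemma join_with_independent_if_two_nbrs:
  assumes "e \<in> N" "e' \<in> N" "e' \<noteq> e"
  shows "join_with_independent V E {x, y}"
proof -
  have DN: "D \<subseteq> N" using D_subset_N_if_two_nbrs assms .
  have "\<not> E a b" if ab: "a \<in> D" "b \<in> D" for a b
  proof
    assume "E a b"
    then have "a \<noteq> b" using graph_irreflp[OF G] by (auto dest: irreflpD)
    have "removable D E N {a}"
      unfolding removable_def outer_adjacent_def using ab \<open>E a b\<close> \<open>a \<noteq> b\<close> DN by blast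
    moreover have "{a} \<subseteq> D" "\<not> N \<subseteq> {a}" using ab \<open>a \<noteq> b\<close> DN by blast+
    ultimately show False using not_removable by blast
  qed
  moreover have "E p q" if "p \<in> {x, y}" "q \<in> D" for p q
  proof -
    have "E q x" "E q y" using DN that twin in_N_iff by blast+
    then show ?thesis using that symE by (auto dest: sympD)
  qed
  ultimately show ?thesis
    using xV yV unfolding join_with_independent_def by blast
qed

lemma simple_diadem_or_diadem_or_join:
  "simple_diadem V E \<or> diadem V E \<or> K2_join_indep V E \<or> coK2_join_indep V E"
proof (cases "\<exists>s. N = {s}")
  case True
  then obtain s where N: "N = {s}" by blast
  obtain S l where "pendant_pairs V E (D - N) S l" using ex_pendant_pairs_D_minus_N by blast
  then have C: "corona_with (V - {x}) E (insert s S) (l(s := y))"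
    using corona_if_one_nbr N by blast
  show ?thesis
  proof (cases "E x y")
    case True
    then have "\<forall>u. E x u \<longleftrightarrow> u = s \<or> u = (l(s := y)) s"
      using nbrs_x_if_one_nbr[OF N] fun_upd_same[of l s y] by metis
    then show ?thesis unfolding diadem_def using xV C by blast
  next
    case False
    then have "\<forall>u. E x u \<longleftrightarrow> u = s" using nbrs_x_if_one_nbr[OF N] by blast
    then show ?thesis unfolding simple_diadem_def using xV C by blast
  qed
next
  case False
  then obtain e e' where "e \<in> N" "e' \<in> N" "e' \<noteq> e" using N_nonempty by blast
  then have "join_with_independent V E {x, y}" by (rule join_with_independent_if_two_nbrs)
  then show ?thesis
    unfolding K2_join_indep_def coK2_join_indep_def using xy by blast
qed

end

theorem theorem3p3:
  fixes V :: "'a set" and E :: "'a \<Rightarrow> 'a \<Rightarrow> bool"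
  assumes "graph V E" and "connected_graph V E" and "card V \<ge> 3"
  shows "Gamma_cer V E = card V - 2 \<longleftrightarrow>
    simple_diadem V E \<or> diadem V E \<or> K2_join_indep V E \<or> coK2_join_indep V E"
proof -
  have "finite V" "card V \<ge> 2" using assms(1,3) unfolding graph_def by auto
  then have "Gamma_cer V E = card V - 2 \<longleftrightarrow>
      (\<exists>x\<in>V. \<exists>y\<in>V. x \<noteq> y \<and> minimal_certified_dominating V E (V - {x, y}))"
    by (rule Gamma_cer_eq_card_minus_2_iff)
  also have "\<dots> \<longleftrightarrow> simple_diadem V E \<or> diadem V E \<or> K2_join_indep V E \<or> coK2_join_indep V E"
  proof
    assume "\<exists>x\<in>V. \<exists>y\<in>V. x \<noteq> y \<and> minimal_certified_dominating V E (V - {x, y})"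
    then obtain x y where "minimal_pair V E x y"
      using assms(1,2) unfolding minimal_pair_def by blast
    then show "simple_diadem V E \<or> diadem V E \<or> K2_join_indep V E \<or> coK2_join_indep V E"
      by (rule minimal_pair.simple_diadem_or_diadem_or_join)
  next
    assume "simple_diadem V E \<or> diadem V E \<or> K2_join_indep V E \<or> coK2_join_indep V E"
    then show "\<exists>x\<in>V. \<exists>y\<in>V. x \<noteq> y \<and> minimal_certified_dominating V E (V - {x, y})"
      using ex_minimal_certified_dominating_pair assms(1,3) by blast
  qed
  finally show ?thesis .
qed

end
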